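(* Let $\zeta\in\mathbb{C}^*$. The group $\overline{G}_q(\zeta):=\mathrm{PSL}_q(2,\mathbb{Z})|_{q=\zeta}$ is finite if and only if $\zeta$ is a primitive $n$-th root of unity for some $n\in\{2,3,4,5\}$.
   Context: Let $q$ be a formal parameter and let $R_q=\begin{pmatrix} q & 1\\ 0 & 1\end{pmatrix}$, $S_q=\begin{pmatrix} 0 & -q^{-1}\\ 1 & 0\end{pmatrix}\in \mathrm{GL}(2,\mathbb{Z}[q,q^{-1}])$. Let $G_q=\langle R_q,S_q\rangle$, and $\mathrm{PSL}_q(2,\mathbb{Z})=G_q/\langle qE_2,-E_2\rangle$, where $E_2$ is the $2\times2$ identity matrix and $\langle qE_2,-E_2\rangle$ is a normal subgroup of $G_q$. For $\zeta\in\mathbb{C}^*$, let $G_q(\zeta)=\{M_q|_{q=\zeta}: M_q\in G_q\}\subset\mathrm{GL}(2,\mathbb{C})$, and $\mathrm{PSL}_q(2,\mathbb{Z})|_{q=\zeta}$ denotes $G_q(\zeta)/\langle \zeta E_2,-E_2\rangle$. *)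

theory Defs
  imports "HOL-Analysis.Analysis"
begin

definition Rq :: "complex \<Rightarrow> complex^2^2" where
  "Rq z = vector [vector [z, 1], vector [0, 1]]"

definition Sq :: "complex \<Rightarrow> complex^2^2" where
  "Sq z = vector [vector [0, - inverse z], vector [1, 0]]"

inductive_set gen_group :: "(complex^2^2) set \<Rightarrow> (complex^2^2) set" for A where
  one: "mat 1 \<in> gen_group A"
| mul: "M \<in> gen_group A \<Longrightarrow> X \<in> A \<Longrightarrow> X ** M \<in> gen_group A"
| mul_inv: "M \<in> gen_group A \<Longrightarrow> X \<in> A \<Longrightarrow> matrix_inv X ** M \<in> gen_group A"

definition Gq :: "complex \<Rightarrow> (complex^2^2) set" where
  "Gq z = gen_group {Rq z, Sq z}"

definition Nq :: "complex \<Rightarrow> (complex^2^2) set" where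
  "Nq z = gen_group {mat z, - mat 1}"

text \<open>The quotient PSL_q(2,Z) at q = z, as the set of cosets M N.\<close>
definition PSLq_at :: "complex \<Rightarrow> (complex^2^2) set set" where
  "PSLq_at z = (\<lambda>M. (\<lambda>N. M ** N) ` Nq z) ` Gq z"

definition primitive_root_of_unity :: "nat \<Rightarrow> complex \<Rightarrow> bool" where
  "primitive_root_of_unity n z \<longleftrightarrow> n > 0 \<and> z ^ n = 1 \<and> (\<forall>k. 0 < k \<and> k < n \<longrightarrow> z ^ k \<noteq> 1)"

end

theory Submission
  imports Defs "HOL-Computational_Algebra.Polynomial_Factorial"
begin

(* If the quotient is finite, every element of G_q(z) has a power that is a scalar matrix.
   For R_q this makes z a root of unity of some order n > 1.  For the word R_q^a S_q with
   a = n div 2, Cayley-Hamilton turns "some power is scalar" into the vanishing of a Lucas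
   sequence U_d(trace, det), which is an integer polynomial identity in z.  Dedekind's
   argument (the Galois conjugates of z are its powers z^m with m coprime to n) moves it to
   z' = cis (2 pi / n), where trace / sqrt det = sin (a pi / n) / sin (pi / n) >= 2 as soon as
   n >= 6, so that U_d(trace, det) cannot vanish.
   Conversely, for n = 2, 3, 4, 5 an explicit finite list of integer polynomial matrices is
   checked by computation to be closed, up to the scalars +-z^e and modulo the cyclotomic
   polynomial, under left multiplication by R_q and S_q; hence G_q(z) itself is finite. *)

section \<open>Two-by-two matrices\<close>

definition mat2 :: "'a::zero \<Rightarrow> 'a \<Rightarrow> 'a \<Rightarrow> 'a \<Rightarrow> 'a^2^2" where
  "mat2 a b c d = vector [vector [a, b], vector [c, d]]"

lemma mat2_nth [simp]:
  "mat2 a b c d $ 1 $ 1 = a" "mat2 a b c d $ 1 $ 2 = b"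
  "mat2 a b c d $ 2 $ 1 = c" "mat2 a b c d $ 2 $ 2 = d"
  by (simp_all add: mat2_def)

lemma mat2_eq_iff: "mat2 a b c d = mat2 a' b' c' d' \<longleftrightarrow> a = a' \<and> b = b' \<and> c = c' \<and> d = d'"
  by (auto simp: mat2_def vec_eq_iff forall_2)

lemma mat_eq_mat2: "mat x = mat2 x 0 0 x"
  by (simp add: vec_eq_iff forall_2 mat_def)

lemma mat2_mult:
  fixes a :: "'a::semiring_1"
  shows "mat2 a b c d ** mat2 e f g h = mat2 (a*e + b*g) (a*f + b*h) (c*e + d*g) (c*f + d*h)"
  by (simp add: vec_eq_iff forall_2 matrix_matrix_mult_def sum_2)

lemma uminus_mat2: "- mat2 a b c d = mat2 (- a) (- b) (- c) (- d)"
  by (simp add: vec_eq_iff forall_2)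

lemma det_mat2: "det (mat2 a b c d) = a * d - b * c"
  by (simp add: det_2)

lemma mat_matrix_mult_nth: "(mat c ** A) $ i $ j = c * A $ i $ j"
  and matrix_mult_mat_nth: "(A ** mat c) $ i $ j = A $ i $ j * (c::'a::semiring_1)"
  by (simp_all add: matrix_matrix_mult_def mat_def if_distrib if_distribR sum.delta sum.delta' cong: if_cong)

lemma mat_mult_commute:
  fixes A :: "'a::comm_semiring_1^'n^'n"
  shows "mat c ** A = A ** mat c"
  by (simp add: vec_eq_iff mat_matrix_mult_nth matrix_mult_mat_nth mult.commute)

lemma mat_mult_mat: "mat a ** mat b = (mat (a * b) :: 'a::semiring_1^'n^'n)"
  by (simp add: vec_eq_iff mat_matrix_mult_nth) (simp add: mat_def)

lemma matrix_inv_eqI: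
  fixes A B :: "'a::field^'n^'n"
  assumes "A ** B = mat 1"
  shows "matrix_inv A = B"
proof -
  have BA: "B ** A = mat 1" using assms matrix_left_right_inverse by blast
  have "A ** matrix_inv A = mat 1 \<and> matrix_inv A ** A = mat 1"
    unfolding matrix_inv_def by (rule someI[of _ B]) (use assms BA in blast)
  then have "matrix_inv A = (B ** A) ** matrix_inv A" by (simp add: BA)
  also have "\<dots> = B" using \<open>_ \<and> _\<close> by (simp add: matrix_mul_assoc[symmetric])
  finally show ?thesis .
qed

lemma matrix_mul_right_cancel:
  fixes A B P :: "'a::field^'n^'n"
  assumes "A ** P = B ** P" and "det P \<noteq> 0"
  shows "A = B"
proof -
  obtain P' where "P ** P' = mat 1"
    using assms(2) invertible_det_nz invertible_right_inverse by blast
  then show ?thesis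
    by (metis assms(1) matrix_mul_assoc matrix_mul_rid)
qed

lemma Rq_eq_mat2: "Rq z = mat2 z 1 0 1"
  by (simp add: Rq_def mat2_def)

lemma Sq_eq_mat2: "Sq z = mat2 0 (- inverse z) 1 0"
  by (simp add: Sq_def mat2_def)

primrec matpow :: "'a::semiring_1^'n^'n \<Rightarrow> nat \<Rightarrow> 'a^'n^'n" where
  "matpow X 0 = mat 1"
| "matpow X (Suc k) = X ** matpow X k"

lemma matpow_add: "matpow X (j + k) = matpow X j ** matpow X k"
  by (induction j) (auto simp: matrix_mul_assoc)

lemma det_matpow: "det (matpow X k) = det X ^ k"
  by (induction k) (auto simp: det_mul)

lemma matpow_mat_mult:
  fixes X :: "'a::comm_semiring_1^'n^'n"
  shows "matpow (mat c ** X) k = mat (c ^ k) ** matpow X k"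
proof (induction k)
  case (Suc k)
  have "matpow (mat c ** X) (Suc k) = mat c ** (X ** mat (c ^ k)) ** matpow X k"
    using Suc by (simp add: matrix_mul_assoc)
  also have "\<dots> = mat (c ^ Suc k) ** matpow X (Suc k)"
    by (simp add: mat_mult_commute[of "c ^ k" X, symmetric] matrix_mul_assoc mat_mult_mat)
  finally show ?case .
qed (simp add: mat_mult_mat)

lemma matpow_Rq: "matpow (Rq z) k = mat2 (z ^ k) (\<Sum>i<k. z ^ i) 0 1"
proof (induction k)
  case (Suc k)
  have "(\<Sum>i<Suc k. z ^ i) = 1 + z * (\<Sum>i<k. z ^ i)"
    unfolding sum.lessThan_Suc_shift by (simp add: sum_distrib_left)
  then show ?case
    using Suc by (simp add: Rq_eq_mat2 mat2_mult mat2_eq_iff add_ac)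
qed (simp add: mat_eq_mat2)

section \<open>The groups \<open>G\<^sub>q(z)\<close> and \<open>N\<^sub>q(z)\<close>\<close>

lemma gen_group_mult:
  assumes "A \<in> gen_group S" and "B \<in> gen_group S"
  shows "A ** B \<in> gen_group S"
  using assms(1)
  by induction (auto simp: matrix_mul_assoc[symmetric] assms(2) intro: gen_group.intros)

lemma gen_group_generator: "X \<in> S \<Longrightarrow> X \<in> gen_group S"
  using gen_group.mul[OF gen_group.one, of X S] by simp

lemma gen_group_matpow: "X \<in> gen_group S \<Longrightarrow> matpow X k \<in> gen_group S"
  by (induction k) (auto intro: gen_group.one gen_group_mult)

lemma gen_group_subset:
  fixes T :: "(complex^2^2) set"
  assumes "mat 1 \<in> T"
    and "\<And>X M. X \<in> S \<Longrightarrow> M \<in> T \<Longrightarrow> X ** M \<in> T"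
    and "\<And>X M. X \<in> S \<Longrightarrow> M \<in> T \<Longrightarrow> matrix_inv X ** M \<in> T"
  shows "gen_group S \<subseteq> T"
proof
  show "M \<in> T" if "M \<in> gen_group S" for M
    using that by induction (use assms in auto)
qed

lemma Rq_in_Gq: "Rq z \<in> Gq z" and Sq_in_Gq: "Sq z \<in> Gq z"
  unfolding Gq_def by (simp_all add: gen_group_generator)

lemma Nq_subset_range_mat:
  assumes "z \<noteq> 0"
  shows "Nq z \<subseteq> range mat"
  unfolding Nq_def
proof (rule gen_group_subset)
  fix X M :: "complex^2^2"
  assume X: "X \<in> {mat z, - mat 1}" and "M \<in> range mat"
  then obtain g where "M = mat g" by blast
  moreover have "matrix_inv (mat z) = (mat (inverse z) :: complex^2^2)"
    using assms by (intro matrix_inv_eqI) (simp add: mat_mult_mat)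
  moreover have "- mat 1 = (mat (- 1) :: complex^2^2)"
    by (simp add: mat_eq_mat2 uminus_mat2)
  moreover have "matrix_inv (mat (- 1)) = (mat (- 1) :: complex^2^2)"
    by (intro matrix_inv_eqI) (simp add: mat_mult_mat)
  ultimately show "X ** M \<in> range mat" "matrix_inv X ** M \<in> range mat"
    using X by (auto simp: mat_mult_mat)
qed auto

text \<open>Pigeonhole: two powers of \<open>X\<close> lie in the same coset of the scalar group \<open>N\<^sub>q(z)\<close>.\<close>
lemma finite_PSLq_imp_matpow_scalar:
  assumes fin: "finite (PSLq_at z)" and z: "z \<noteq> 0" and X: "X \<in> Gq z" and det: "det X \<noteq> 0"
  shows "\<exists>d>0. \<exists>g. matpow X d = mat g"
proof -
  define coset where "coset k = (\<lambda>N. matpow X k ** N) ` Nq z" for k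
  have "range coset \<subseteq> PSLq_at z"
    using gen_group_matpow[of X] X by (auto simp: coset_def PSLq_at_def Gq_def)
  then have "\<not> inj coset"
    using fin finite_subset finite_imageD infinite_UNIV_nat by blast
  then obtain j k where "j < k" "coset j = coset k"
    unfolding inj_def by (metis linorder_neqE_nat)
  moreover have "matpow X k \<in> coset k"
    unfolding coset_def Nq_def by (rule image_eqI[of _ _ "mat 1"]) (auto intro: gen_group.one)
  ultimately obtain C where C: "C \<in> Nq z" "matpow X k = matpow X j ** C"
    by (auto simp: coset_def)
  obtain g where g: "C = mat g" using Nq_subset_range_mat[OF z] C(1) by blast
  have "matpow X (k - j) ** matpow X j = mat g ** matpow X j"
    using C g \<open>j < k\<close> by (simp add: matpow_add[symmetric] mat_mult_commute)
  then have "matpow X (k - j) = mat g"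
    by (rule matrix_mul_right_cancel) (simp add: det_matpow det)
  then show ?thesis using \<open>j < k\<close> by (intro exI[of _ "k - j"]) auto
qed

section \<open>Integer polynomials and congruences modulo a prime\<close>

definition ipoly :: "'a::comm_ring_1 \<Rightarrow> int poly \<Rightarrow> 'a" where
  "ipoly w P = poly (map_poly of_int P) w"

lemma map_poly_of_int_add: "map_poly of_int (P + Q) = map_poly of_int P + map_poly of_int Q"
  by (simp add: poly_eq_iff coeff_map_poly)

lemma map_poly_of_int_diff: "map_poly of_int (P - Q) = map_poly of_int P - map_poly of_int Q"
  by (simp add: poly_eq_iff coeff_map_poly)

lemma map_poly_of_int_mult: "map_poly of_int (P * Q) = map_poly of_int P * map_poly of_int Q"
  by (simp add: poly_eq_iff coeff_map_poly coeff_mult)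

lemma ipoly_0 [simp]: "ipoly w 0 = 0"
  and ipoly_1 [simp]: "ipoly w 1 = 1"
  and ipoly_const [simp]: "ipoly w [:c:] = of_int c"
  and ipoly_pCons: "ipoly w (pCons c P) = of_int c + w * ipoly w P"
  and ipoly_monom [simp]: "ipoly w (monom c n) = of_int c * w ^ n"
  and ipoly_smult [simp]: "ipoly w (smult c P) = of_int c * ipoly w P"
  and ipoly_add [simp]: "ipoly w (P + Q) = ipoly w P + ipoly w Q"
  and ipoly_diff [simp]: "ipoly w (P - Q) = ipoly w P - ipoly w Q"
  and ipoly_mult [simp]: "ipoly w (P * Q) = ipoly w P * ipoly w Q"
  by (simp_all add: ipoly_def map_poly_pCons map_poly_smult poly_monom map_poly_monom
      map_poly_of_int_add map_poly_of_int_diff map_poly_of_int_mult)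

lemma ipoly_uminus [simp]: "ipoly w (- P) = - ipoly w P"
  using ipoly_diff[of w 0 P] by simp

lemma ipoly_sum: "ipoly w (sum f A) = (\<Sum>x\<in>A. ipoly w (f x))"
  by (induction A rule: infinite_finite_induct) auto

lemma ipoly_pcompose_monom: "ipoly w (pcompose P (monom 1 p)) = ipoly (w ^ p) P"
  by (induction P) (simp_all add: pcompose_pCons ipoly_pCons)

definition ring_cong :: "nat \<Rightarrow> 'a::comm_ring_1 \<Rightarrow> 'a \<Rightarrow> bool" where
  "ring_cong p a b \<longleftrightarrow> of_nat p dvd a - b"

lemma ring_cong_refl [simp]: "ring_cong p a a"
  by (simp add: ring_cong_def)

lemma ring_cong_sym: "ring_cong p a b \<Longrightarrow> ring_cong p b a"
  unfolding ring_cong_def by (metis dvd_minus_iff minus_diff_eq)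

lemma ring_cong_trans [trans]: "ring_cong p a b \<Longrightarrow> ring_cong p b c \<Longrightarrow> ring_cong p a c"
proof -
  have "a - c = (a - b) + (b - c)" by simp
  then show "ring_cong p a b \<Longrightarrow> ring_cong p b c \<Longrightarrow> ring_cong p a c"
    unfolding ring_cong_def by (metis dvd_add)
qed

lemma ring_cong_add: "ring_cong p a b \<Longrightarrow> ring_cong p c d \<Longrightarrow> ring_cong p (a + c) (b + d)"
  unfolding ring_cong_def by (metis dvd_add add_diff_add)

lemma ring_cong_mult: "ring_cong p a b \<Longrightarrow> ring_cong p c d \<Longrightarrow> ring_cong p (a * c) (b * d)"
proof -
  have "a * c - b * d = (a - b) * c + b * (c - d)" by (simp add: algebra_simps)
  then show "ring_cong p a b \<Longrightarrow> ring_cong p c d \<Longrightarrow> ring_cong p (a * c) (b * d)"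
    unfolding ring_cong_def by (metis dvd_add dvd_mult dvd_mult2)
qed

lemma frobenius_ring_cong:
  fixes x y :: "'a::comm_ring_1"
  assumes p: "prime p"
  shows "ring_cong p ((x + y) ^ p) (x ^ p + y ^ p)"
proof -
  define f where "f k = of_nat (p choose k) * x ^ k * y ^ (p - k)" for k
  have p0: "p > 0" using prime_gt_0_nat[OF p] .
  have "{..p} = insert 0 (insert p {1..<p})" using p0 by auto
  then have "(x + y) ^ p = f 0 + (f p + (\<Sum>k\<in>{1..<p}. f k))"
    using p0 by (simp add: binomial_ring f_def[abs_def])
  moreover have "f 0 = y ^ p" "f p = x ^ p" by (simp_all add: f_def)
  ultimately have "(x + y) ^ p - (x ^ p + y ^ p) = (\<Sum>k\<in>{1..<p}. f k)" by (simp add: algebra_simps)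
  moreover have "of_nat p dvd f k" if "k \<in> {1..<p}" for k
  proof -
    have "p dvd p choose k" using that p by (intro dvd_choose_prime) auto
    then show ?thesis unfolding f_def by (elim dvdE) (simp add: mult.assoc)
  qed
  ultimately show ?thesis unfolding ring_cong_def by (metis dvd_sum)
qed

lemma fermat_ring_cong_int:
  fixes c :: int
  assumes p: "prime p"
  shows "ring_cong p (c ^ p) c"
proof (induction c rule: int_induct[where k = 0])
  case base
  show ?case using prime_gt_0_nat[OF p] by (simp add: zero_power)
next
  case (step1 i)
  have "ring_cong p ((i + 1) ^ p) (i ^ p + 1 ^ p)" by (rule frobenius_ring_cong[OF p])
  moreover have "ring_cong p (i ^ p + 1 ^ p) (i + 1)" using step1 by (auto intro: ring_cong_add)
  ultimately show ?case by (rule ring_cong_trans)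
next
  case (step2 i)
  have "ring_cong p (i ^ p) ((i - 1) ^ p + 1)"
    using frobenius_ring_cong[OF p, of "i - 1" 1] by simp
  then have "ring_cong p ((i - 1) ^ p + 1 + (- 1)) (i ^ p + (- 1))"
    by (rule ring_cong_add[OF ring_cong_sym ring_cong_refl])
  also have "ring_cong p (i ^ p + (- 1)) (i + (- 1))"
    by (intro ring_cong_add step2(2) ring_cong_refl)
  finally show ?case by simp
qed

lemma ring_cong_const:
  assumes "ring_cong p a b"
  shows "ring_cong p [:a:] [:b:]"
proof -
  obtain k where "a - b = of_nat p * k" using assms unfolding ring_cong_def by blast
  then have "[:a:] - [:b:] = of_nat p * [:k:]" by (simp add: of_nat_poly)
  then show ?thesis unfolding ring_cong_def by (rule dvdI)
qed

lemma pcompose_monom_prime_ring_cong: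
  fixes P :: "int poly"
  assumes p: "prime p"
  shows "ring_cong p (pcompose P (monom 1 p)) (P ^ p)"
proof (induction P)
  case 0
  show ?case using prime_gt_0_nat[OF p] by (simp add: zero_power)
next
  case (pCons c P)
  have "pCons c P = [:c:] + monom 1 1 * P" by (simp add: monom_Suc)
  then have "ring_cong p ((pCons c P) ^ p) ([:c:] ^ p + (monom 1 1 * P) ^ p)"
    by (simp only: frobenius_ring_cong[OF p])
  also have "[:c:] ^ p + (monom 1 1 * P) ^ p = [:c ^ p:] + monom 1 p * P ^ p"
    by (simp add: power_mult_distrib monom_power poly_const_pow)
  also have "ring_cong p \<dots> ([:c:] + monom 1 p * pcompose P (monom 1 p))"
    by (intro ring_cong_add ring_cong_const fermat_ring_cong_int[OF p] ring_cong_mult ring_cong_refl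
        ring_cong_sym[OF pCons.IH])
  finally show ?case unfolding pcompose_pCons by (rule ring_cong_sym)
qed

section \<open>Roots of unity: Galois conjugates of a root of an integer polynomial\<close>

text \<open>Reduce the coefficients of \<open>Q\<close> modulo \<open>p\<close> to get \<open>Q\<^sub>0\<close>: the top coefficient of \<open>f Q\<^sub>0\<close> is the
  leading coefficient of \<open>Q\<^sub>0\<close>, which is not divisible by \<open>p\<close> unless \<open>Q\<^sub>0 = 0\<close>.\<close>
lemma dvd_const_if_monic_mult_ring_cong:
  fixes f Q :: "int poly"
  assumes monic: "lead_coeff f = 1" and deg: "degree f \<ge> 1" and cong: "ring_cong p (f * Q) [:c:]"
  shows "int p dvd c"
proof -
  define Q0 where "Q0 = map_poly (\<lambda>a. a mod int p) Q"
  have "Q = Q0 + smult (int p) (map_poly (\<lambda>a. a div int p) Q)"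
    by (simp add: poly_eq_iff Q0_def coeff_map_poly mod_mult_div_eq)
  then have "f * Q - [:c:] = (f * Q0 - [:c:]) + smult (int p) (f * map_poly (\<lambda>a. a div int p) Q)"
    by (metis (no_types, lifting) add_diff_eq diff_add_eq distrib_left mult_smult_right)
  moreover have "int p dvd coeff (f * Q - [:c:]) i" for i
    using cong by (simp add: ring_cong_def of_nat_poly const_poly_dvd_iff)
  ultimately have cong0: "int p dvd coeff (f * Q0 - [:c:]) i" for i
    by (metis coeff_add coeff_smult dvd_add_left_iff dvd_triv_left)
  show ?thesis
  proof (cases "Q0 = 0")
    case True
    then show ?thesis using cong0[of 0] by simp
  next
    case False
    have "coeff [:c:] (degree f + degree Q0) = 0"
      using deg by (simp add: coeff_pCons split: nat.split)
    then have "int p dvd lead_coeff Q0"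
      using cong0[of "degree f + degree Q0"] monic by (simp add: coeff_mult_degree_sum)
    moreover have "lead_coeff Q0 = coeff Q (degree Q0) mod int p"
      by (simp add: Q0_def coeff_map_poly)
    ultimately have "lead_coeff Q0 = 0"
      by (metis dvd_mod_iff dvd_refl dvd_eq_mod_eq_0)
    with False show ?thesis by simp
  qed
qed

text \<open>Gauss's lemma: the primitive part of a nonzero integer polynomial of least degree vanishing
  at \<open>w\<close> divides every integer polynomial vanishing at \<open>w\<close>; it is monic because it divides \<open>F\<close>.\<close>
lemma monic_minimal_int_poly_exists:
  fixes w :: "'a::{idom,ring_char_0}"
  assumes F: "lead_coeff F = 1" and Fw: "ipoly w F = 0"
  obtains f where "lead_coeff f = 1" "ipoly w f = 0" "\<And>P. ipoly w P = 0 \<Longrightarrow> f dvd P"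
proof -
  define d where "d = (LEAST k. \<exists>P. P \<noteq> 0 \<and> ipoly w P = 0 \<and> degree P = k)"
  have ex: "\<exists>k P. P \<noteq> 0 \<and> ipoly w P = 0 \<and> degree P = k"
    using F Fw by (intro exI[of _ "degree F"] exI[of _ F]) auto
  obtain f0 where f0: "f0 \<noteq> 0" "ipoly w f0 = 0" "degree f0 = d"
    using LeastI_ex[OF ex] unfolding d_def by blast
  have d_least: "d \<le> degree P" if "P \<noteq> 0" "ipoly w P = 0" for P
    unfolding d_def by (rule Least_le) (use that in blast)
  define f1 where "f1 = primitive_part f0"
  have "ipoly w f0 = of_int (content f0) * ipoly w f1"
    by (metis f1_def content_times_primitive_part ipoly_smult)
  then have f1w: "ipoly w f1 = 0" using f0 by simp
  have f1d: "degree f1 = d" using f0(3) by (simp add: f1_def degree_primitive_part)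
  have f1c: "content f1 = 1" using f0(1) by (simp add: f1_def content_primitive_part)
  then have f1nz: "f1 \<noteq> 0" by auto
  have f1_dvd: "f1 dvd P" if Pw: "ipoly w P = 0" for P
  proof -
    obtain q r where qr: "pseudo_divmod P f1 = (q, r)" by fastforce
    define c where "c = lead_coeff f1 ^ (Suc (degree P) - degree f1)"
    have eq: "smult c P = f1 * q + r" and rd: "r = 0 \<or> degree r < degree f1"
      using pseudo_divmod[OF f1nz qr] by (simp_all add: c_def)
    have "ipoly w r = 0" using arg_cong[OF eq, of "ipoly w"] Pw f1w by simp
    then have "r = 0" using rd d_least[of r] f1d by fastforce
    then have "fract_poly f1 dvd smult (to_fract c) (fract_poly P)"
      using eq by (metis dvd_triv_left fract_poly_dvd fract_poly_smult add_0_right)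
    then have "fract_poly f1 dvd fract_poly P"
      by (rule dvd_smult_cancel) (simp add: c_def f1nz)
    then show ?thesis using f1c by (rule fract_poly_dvdD)
  qed
  obtain g1 where "F = f1 * g1" using f1_dvd[OF Fw] by (elim dvdE)
  then have "lead_coeff f1 * lead_coeff g1 = 1" using F by (simp add: lead_coeff_mult)
  then have "lead_coeff f1 = 1 \<or> lead_coeff f1 = -1" by (simp add: zmult_eq_1_iff) blast
  then show ?thesis
  proof
    assume "lead_coeff f1 = 1"
    then show ?thesis using that f1w f1_dvd by blast
  next
    assume "lead_coeff f1 = -1"
    then show ?thesis using that[of "- f1"] f1w f1_dvd by simp
  qed
qed

text \<open>The factors of \<open>x\<^sup>n - 1\<close> are coprime over \<open>\<int>[1/n]\<close>: differentiate \<open>f g = x\<^sup>n - 1\<close>.\<close>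
lemma xn_minus_1_factors_combination:
  fixes f g :: "int poly"
  assumes fg: "f * g = monom 1 n - 1" and n: "n > 0"
  shows "[:int n:] = g * (monom 1 1 * pderiv f) + f * (monom 1 1 * pderiv g - smult (int n) g)"
proof -
  have "monom 1 1 * pderiv (monom (1::int) n - 1) = monom (int n) n"
    using n by (simp add: pderiv_diff pderiv_monom mult_monom)
  then have "monom 1 1 * pderiv (f * g) - smult (int n) (f * g) = [:int n:]"
    unfolding fg by (simp add: smult_monom smult_diff_right)
  then show ?thesis
    unfolding pderiv_mult by (simp add: algebra_simps mult_smult_right)
qed

text \<open>Dedekind's argument: if \<open>w\<^sup>p\<close> were not a root of the minimal polynomial \<open>f\<close> of \<open>w\<close>, it would be
  a root of the cofactor \<open>g\<close>, so \<open>f\<close> would divide \<open>g(x\<^sup>p) \<equiv> g\<^sup>p (mod p)\<close>; raising the identity of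
  the previous lemma to the \<open>p\<close>-th power then makes \<open>f\<close> divide \<open>n\<^sup>p\<close> modulo \<open>p\<close>.\<close>
lemma minimal_poly_root_power_prime:
  fixes f g :: "int poly" and w :: "'a::{idom,ring_char_0}"
  assumes monic: "lead_coeff f = 1" and fg: "f * g = monom 1 n - 1" and n: "n > 0"
    and root: "ipoly w f = 0" and minimal: "\<And>P. ipoly w P = 0 \<Longrightarrow> f dvd P"
    and p: "prime p" and pn: "\<not> p dvd n"
  shows "ipoly (w ^ p) f = 0"
proof (rule ccontr)
  assume nz: "ipoly (w ^ p) f \<noteq> 0"
  have "w ^ n = 1" using arg_cong[OF fg, of "ipoly w"] root by simp
  then have "(w ^ p) ^ n = 1" by (metis power_mult mult.commute power_one)
  then have "ipoly (w ^ p) f * ipoly (w ^ p) g = 0"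
    using arg_cong[OF fg, of "ipoly (w ^ p)"] by simp
  then have "ipoly w (pcompose g (monom 1 p)) = 0"
    using nz by (simp add: ipoly_pcompose_monom)
  then obtain u where u: "pcompose g (monom 1 p) = f * u" using minimal by (blast elim: dvdE)
  have deg: "degree f \<ge> 1"
  proof (rule ccontr)
    assume "\<not> degree f \<ge> 1"
    then have "degree f = 0" by simp
    then have "f = [:lead_coeff f:]" by (metis degree_0_id)
    then have "f = 1" using monic by (simp add: one_pCons)
    then show False using root by simp
  qed
  obtain p' where p': "p = Suc p'" using prime_gt_0_nat[OF p] gr0_implies_Suc by blast
  define A where "A = monom 1 1 * pderiv f"
  define B where "B = monom 1 1 * pderiv g - smult (int n) g"
  have "ring_cong p ([:int n:] ^ p) ((g * A) ^ p + (f * B) ^ p)"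
    unfolding xn_minus_1_factors_combination[OF fg n, folded A_def B_def] by (rule frobenius_ring_cong[OF p])
  also have "ring_cong p \<dots> (pcompose g (monom 1 p) * A ^ p + (f * B) ^ p)"
    unfolding power_mult_distrib
    by (intro ring_cong_add ring_cong_mult ring_cong_refl ring_cong_sym[OF pcompose_monom_prime_ring_cong[OF p]])
  also have "pcompose g (monom 1 p) * A ^ p + (f * B) ^ p = f * (u * A ^ p + f ^ p' * B ^ p)"
    unfolding u by (simp add: p' algebra_simps power_mult_distrib)
  finally have "ring_cong p (f * (u * A ^ p + f ^ p' * B ^ p)) [:int n ^ p:]"
    unfolding poly_const_pow by (rule ring_cong_sym)
  then have "int p dvd int n ^ p" by (rule dvd_const_if_monic_mult_ring_cong[OF monic deg])
  then have "p dvd n" using p by (metis of_nat_dvd_iff of_nat_power prime_dvd_power_nat)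
  with pn show False ..
qed

lemma ipoly_root_power_prime:
  fixes w :: "'a::{idom,ring_char_0}"
  assumes "w ^ n = 1" "n > 0" "prime p" "\<not> p dvd n" "ipoly w P = 0"
  shows "ipoly (w ^ p) P = 0"
proof -
  have "monom 1 n - 1 = - 1 + monom (1::int) n" by simp
  then have "lead_coeff (monom 1 n - 1 :: int poly) = 1"
    using lead_coeff_add_le[of "- 1" "monom (1::int) n"] assms(2) by (simp add: degree_monom_eq)
  moreover have "ipoly w (monom 1 n - 1) = 0" using assms(1) by simp
  ultimately obtain f where f: "lead_coeff f = 1" "ipoly w f = 0" "\<And>P. ipoly w P = 0 \<Longrightarrow> f dvd P"
    using monic_minimal_int_poly_exists by blast
  then obtain g where "f * g = monom 1 n - 1" using \<open>ipoly w (monom 1 n - 1) = 0\<close> by (metis dvdE)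
  then have "ipoly (w ^ p) f = 0" using minimal_poly_root_power_prime f assms(2-4) by blast
  moreover obtain Q where "P = f * Q" using f(3) assms(5) by (blast elim: dvdE)
  ultimately show ?thesis by simp
qed

lemma ipoly_root_power_coprime:
  fixes w :: "'a::{idom,ring_char_0}"
  assumes w: "w ^ n = 1" and n: "n > 0" and P: "ipoly w P = 0"
  shows "coprime m n \<Longrightarrow> ipoly (w ^ m) P = 0"
proof (induction m rule: prime_divisors_induct)
  case zero
  then have "w = 1" using w by simp
  then show ?case using P by simp
next
  case (unit m)
  then show ?case using P by simp
next
  case (factor q m)
  have "\<not> q dvd n"
  proof
    assume "q dvd n"
    then have "is_unit q" using factor.prems by (meson coprime_common_divisor dvd_triv_left)
    with factor.hyps(1) show False by (simp add: not_prime_unit)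
  qed
  have "coprime m n" using factor.prems by simp
  then have "ipoly (w ^ m) P = 0" using factor.IH by blast
  moreover have "(w ^ m) ^ n = 1" using w by (metis power_mult mult.commute power_one)
  ultimately have "ipoly ((w ^ m) ^ q) P = 0"
    using ipoly_root_power_prime n factor.hyps \<open>\<not> q dvd n\<close> by blast
  then show ?case by (metis power_mult mult.commute)
qed

section \<open>Lucas sequences\<close>

fun lucasU :: "'a::comm_ring_1 \<Rightarrow> 'a \<Rightarrow> nat \<Rightarrow> 'a" where
  "lucasU t d 0 = 0"
| "lucasU t d (Suc 0) = 1"
| "lucasU t d (Suc (Suc k)) = t * lucasU t d (Suc k) - d * lucasU t d k"

lemma ipoly_lucasU: "ipoly w (lucasU T D k) = lucasU (ipoly w T) (ipoly w D) k"
  by (induction T D k rule: lucasU.induct) auto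

lemma lucasU_scale: "lucasU (v * s) (v ^ 2) k * v = v ^ k * lucasU s 1 k"
  by (induction "v * s" "v ^ 2" k rule: lucasU.induct) (auto simp: algebra_simps power2_eq_square)

lemma lucasU_of_real: "lucasU (of_real s :: 'a::{real_algebra_1,comm_ring_1}) 1 k = of_real (lucasU s 1 k)"
  by (induction "of_real s :: 'a" "1 :: 'a" k rule: lucasU.induct) auto

lemma lucasU_ge:
  fixes s :: real
  assumes "s \<ge> 2"
  shows "lucasU s 1 k \<ge> k"
proof -
  have "lucasU s 1 (Suc k) - lucasU s 1 k \<ge> 1 \<and> lucasU s 1 k \<ge> k" for k
  proof (induction k)
    case (Suc k)
    have "lucasU s 1 (Suc (Suc k)) - lucasU s 1 (Suc k)
        = (s - 2) * lucasU s 1 (Suc k) + (lucasU s 1 (Suc k) - lucasU s 1 k)"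
      by (simp add: algebra_simps)
    moreover have "(s - 2) * lucasU s 1 (Suc k) \<ge> 0" using Suc assms by simp
    ultimately show ?case using Suc by simp
  qed simp
  then show ?thesis by blast
qed

lemma matpow_mat2_lucasU:
  fixes a b c d :: "'a::comm_ring_1"
  defines "U \<equiv> lucasU (a + d) (a * d - b * c)"
  shows "matpow (mat2 a b c d) (Suc k) =
    mat2 (U (Suc k) * a - (a * d - b * c) * U k) (U (Suc k) * b)
         (U (Suc k) * c) (U (Suc k) * d - (a * d - b * c) * U k)"
  unfolding U_def
proof (induction k)
  case (Suc k)
  show ?case
    by (subst matpow.simps(2), subst Suc) (simp add: mat2_mult mat2_eq_iff algebra_simps)
qed (simp add: mat_eq_mat2 mat2_mult)

section \<open>A trigonometric estimate\<close>

lemma sin_half_ge_twice_sin: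
  fixes n :: nat
  assumes n: "n \<ge> 6"
  shows "2 * sin (pi / n) \<le> sin (real (n div 2) * (pi / n))"
proof (cases "n = 6")
  case True
  then show ?thesis by (simp add: sin_30)
next
  case False
  then have n7: "n \<ge> 7" using n by simp
  define y where "y = pi / (2 * n)"
  have y0: "0 \<le> y" by (simp add: y_def)
  have "y \<le> pi / 14" unfolding y_def using n7 by (intro divide_left_mono) auto
  also have "pi / 14 < 1 / 4" using pi_approx by simp
  finally have y4: "y < 1 / 4" .
  have cy: "cos y \<ge> 0" using y0 \<open>y \<le> pi / 14\<close> by (intro cos_ge_zero) auto
  have "pi / n = 2 * y" by (simp add: y_def)
  then have "2 * sin (pi / n) = (4 * sin y) * cos y" by (simp add: sin_double)
  also have "\<dots> \<le> 1 * cos y"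
    using sin_x_le_x[OF y0] y4 cy by (intro mult_right_mono) auto
  also have "\<dots> = sin (pi / 2 - y)" by (simp add: cos_sin_eq)
  also have "\<dots> \<le> sin (real (n div 2) * (pi / n))"
  proof (rule sin_monotone_2pi_le)
    show "- (pi / 2) \<le> pi / 2 - y" using \<open>y \<le> pi / 14\<close> pi_gt_zero by linarith
    have eqs: "pi / 2 - y = pi * (real n - 1) / (2 * n)"
      "real (n div 2) * (pi / n) = pi * (2 * real (n div 2)) / (2 * n)"
      "pi / 2 = pi * real n / (2 * n)"
      using n7 by (simp_all add: y_def field_simps)
    have "pi * (real n - 1) \<le> pi * (2 * real (n div 2))"
      by (intro mult_left_mono) simp_all
    then show "pi / 2 - y \<le> real (n div 2) * (pi / n)"
      unfolding eqs(1,2) by (rule divide_right_mono) simp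
    have "pi * (2 * real (n div 2)) \<le> pi * real n"
      by (intro mult_left_mono) simp_all
    then show "real (n div 2) * (pi / n) \<le> pi / 2"
      unfolding eqs(2,3) by (rule divide_right_mono) simp
  qed
  finally show ?thesis .
qed

lemma cis_double_minus_1: "cis (2 * y) - 1 = cis y * (2 * \<i> * of_real (sin y))"
  by (simp add: complex_eq_iff cos_double_sin sin_double power2_eq_square)

lemma cis_geometric_sum:
  assumes "sin x \<noteq> 0"
  shows "cis (2 * x) * (\<Sum>i<a. cis (2 * x) ^ i) = cis (real (a + 1) * x) * of_real (sin (a * x) / sin x)"
proof -
  let ?S = "\<Sum>i<a. cis (2 * x) ^ i"
  have "cis x * (2 * \<i> * of_real (sin x)) * ?S = cis (2 * x) ^ a - 1"
    by (simp add: power_diff_1_eq cis_double_minus_1)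
  also have "\<dots> = cis (a * x) * (2 * \<i> * of_real (sin (a * x)))"
    using cis_double_minus_1[of "a * x"] by (simp add: Complex.DeMoivre mult.left_commute)
  finally have S: "cis x * (of_real (sin x) * ?S) = cis (a * x) * of_real (sin (a * x))"
    by (simp add: mult_ac)
  have "of_real (sin x) * (cis (2 * x) * ?S) = cis x * (cis x * (of_real (sin x) * ?S))"
    by (simp add: cis_mult mult_ac)
  also have "\<dots> = (cis x * cis (a * x)) * of_real (sin (a * x))"
    by (simp only: S mult.assoc)
  also have "\<dots> = of_real (sin x) * (cis (real (a + 1) * x) * of_real (sin (a * x) / sin x))"
    using assms by (simp add: cis_mult algebra_simps)
  finally show ?thesis using assms by (metis mult_left_cancel of_real_eq_0_iff)
qed

text \<open>With \<open>v = cis ((a + 1) x)\<close> the trace is \<open>v\<close> times the real number \<open>sin (a x) / sin x \<ge> 2\<close> and the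
  determinant is \<open>v\<^sup>2\<close>, so the Lucas sequence is \<open>v\<^sup>d\<^sup>-\<^sup>1\<close> times one with real parameter \<open>\<ge> 2\<close>.\<close>
lemma lucasU_cis_nonzero:
  fixes n d :: nat
  assumes n: "n \<ge> 6" and d: "d > 0"
  shows "lucasU (cis (2 * (pi / n)) * (\<Sum>i<n div 2. cis (2 * (pi / n)) ^ i))
                (cis (2 * (pi / n)) ^ (n div 2 + 1)) d \<noteq> 0"
proof -
  define x where "x = pi / n"
  define a where "a = n div 2"
  define v where "v = cis (real (a + 1) * x)"
  define \<sigma> where "\<sigma> = sin (a * x) / sin x"
  have "pi / n < pi" using n by (simp add: field_simps)
  then have sx: "sin x > 0" using n by (intro sin_gt_zero) (simp_all add: x_def)
  then have \<sigma>2: "\<sigma> \<ge> 2"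
    using sin_half_ge_twice_sin[OF n] by (simp add: \<sigma>_def a_def x_def le_divide_eq)
  have trace: "cis (2 * x) * (\<Sum>i<a. cis (2 * x) ^ i) = v * of_real \<sigma>"
    using cis_geometric_sum[of x a] sx by (simp add: v_def \<sigma>_def)
  have det: "cis (2 * x) ^ (a + 1) = v ^ 2"
    by (simp add: v_def Complex.DeMoivre cis_mult algebra_simps)
  have "lucasU (v * of_real \<sigma>) (v ^ 2) d * v = v ^ d * of_real (lucasU \<sigma> 1 d)"
    by (simp add: lucasU_scale lucasU_of_real)
  moreover have "lucasU \<sigma> 1 d \<noteq> 0" using lucasU_ge[OF \<sigma>2, of d] d by linarith
  ultimately have "lucasU (v * of_real \<sigma>) (v ^ 2) d \<noteq> 0" by (auto simp: v_def)
  then show ?thesis using trace det by (simp add: x_def a_def)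
qed

section \<open>Finiteness forces a root of unity of order at most 5\<close>

lemma finite_PSLq_imp_root_of_unity:
  assumes fin: "finite (PSLq_at z)" and z: "z \<noteq> 0"
  shows "\<exists>d>0. z ^ d = 1" and "z \<noteq> 1"
proof -
  have "det (Rq z) \<noteq> 0" using z by (simp add: Rq_eq_mat2 det_mat2)
  then obtain d g where d: "d > 0" "matpow (Rq z) d = mat g"
    using finite_PSLq_imp_matpow_scalar[OF fin z Rq_in_Gq] by blast
  then have "z ^ d = g" "(\<Sum>i<d. z ^ i) = 0" "1 = g"
    by (simp_all add: matpow_Rq mat_eq_mat2 mat2_eq_iff)
  then show "\<exists>d>0. z ^ d = 1" and "z \<noteq> 1" using d(1) by auto
qed

lemma primitive_root_of_unity_exists:
  assumes "d > 0" and "z ^ d = 1"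
  shows "\<exists>n. primitive_root_of_unity n z"
proof -
  define n where "n = (LEAST k. 0 < k \<and> z ^ k = 1)"
  have "0 < n \<and> z ^ n = 1"
    unfolding n_def by (rule LeastI[of _ d]) (use assms in blast)
  moreover have "\<not> (0 < k \<and> z ^ k = 1)" if "k < n" for k
    using not_less_Least[of k "\<lambda>k. 0 < k \<and> z ^ k = 1"] that unfolding n_def by blast
  ultimately show ?thesis unfolding primitive_root_of_unity_def by blast
qed

lemma primitive_root_of_unity_power_eq_cis:
  fixes z :: complex
  assumes prim: "primitive_root_of_unity n z" and n: "n > 1"
  shows "\<exists>m. coprime m n \<and> z ^ m = cis (2 * (pi / n))"
proof -
  have zn: "z ^ n = 1" and not_one: "\<And>k. 0 < k \<Longrightarrow> k < n \<Longrightarrow> z ^ k \<noteq> 1"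
    using prim by (auto simp: primitive_root_of_unity_def)
  obtain k where "k < n" and k: "z = cis (2 * pi * real k / real n)"
    using Complex.bij_betw_roots_unity[of n] zn n unfolding bij_betw_def by auto
  have z_power: "z ^ j = cis (2 * pi * (real k * real j) / real n)" for j
    unfolding k Complex.DeMoivre by (simp add: algebra_simps)
  have "coprime k n"
  proof (rule ccontr)
    assume "\<not> coprime k n"
    then have g: "gcd k n \<noteq> 1" by (simp add: coprime_iff_gcd_eq_1)
    define n' where "n' = n div gcd k n"
    have "0 < gcd k n" "gcd k n \<le> n" using n by simp_all
    moreover from this g have "1 < gcd k n" by linarith
    ultimately have "0 < n'" "n' < n"
      using n by (simp_all add: n'_def div_greater_zero_iff div_less_dividend)
    have "real k * real n' / real n = real (k div gcd k n)"
      using n by (simp add: n'_def field_simps real_of_nat_div flip: of_nat_mult)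
    then have "2 * pi * (real k * real n') / real n = 2 * pi * real (k div gcd k n)"
      by (metis times_divide_eq_right)
    then have "z ^ n' = 1"
      unfolding z_power by (simp add: cis_multiple_2pi)
    with not_one[OF \<open>0 < n'\<close> \<open>n' < n\<close>] show False ..
  qed
  moreover have "k \<noteq> 0"
  proof
    assume "k = 0"
    with calculation have "n dvd 1" by simp
    with n show False by simp
  qed
  ultimately obtain m y where "k * m = n * y + 1"
    using bezout_nat[of k n] by (auto simp: coprime_iff_gcd_eq_1)
  then have "coprime m n"
    by (metis coprime_add_one_left coprime_commute coprime_mult_right_iff)
  moreover have "z ^ m = cis (2 * (pi / n))"
  proof -
    have "2 * pi * (real k * real m) / real n = 2 * pi * real y + 2 * (pi / n)"
      using \<open>k * m = n * y + 1\<close> n by (simp add: field_simps flip: of_nat_mult of_nat_add)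
    then show ?thesis unfolding z_power by (simp add: cis_mult[symmetric] cis_multiple_2pi)
  qed
  ultimately show ?thesis by blast
qed

text \<open>The word \<open>R\<^sup>a S\<close> has finite order modulo scalars; by Cayley-Hamilton its off-diagonal entries
  are multiples of the Lucas sequence of its trace and determinant.\<close>
lemma finite_PSLq_imp_lucasU_zero:
  assumes fin: "finite (PSLq_at z)" and z: "z \<noteq> 0"
  shows "\<exists>d>0. lucasU (z * (\<Sum>i<a. z ^ i)) (z ^ (a + 1)) d = 0"
proof -
  define X where "X = matpow (Rq z) a ** Sq z"
  have "X \<in> Gq z"
    unfolding X_def using Rq_in_Gq Sq_in_Gq unfolding Gq_def by (intro gen_group_mult gen_group_matpow)
  moreover have X: "X = mat2 (\<Sum>i<a. z ^ i) (- (z ^ a * inverse z)) 1 0"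
    by (simp add: X_def matpow_Rq Sq_eq_mat2 mat2_mult)
  moreover have "det X \<noteq> 0" using z by (simp add: X det_mat2)
  ultimately obtain d g where d: "d > 0" "matpow X d = mat g"
    using finite_PSLq_imp_matpow_scalar[OF fin z] by blast
  have "mat z ** X = mat2 (z * (\<Sum>i<a. z ^ i)) (- (z ^ a)) z 0"
    using z by (simp add: X mat_eq_mat2 mat2_mult mat2_eq_iff field_simps)
  then have "matpow (mat2 (z * (\<Sum>i<a. z ^ i)) (- (z ^ a)) z 0) d = mat (z ^ d * g)"
    by (metis d(2) matpow_mat_mult mat_mult_mat)
  moreover obtain d' where "d = Suc d'" using d(1) gr0_implies_Suc by blast
  ultimately have "lucasU (z * (\<Sum>i<a. z ^ i)) (z ^ a * z) d * z ^ a = 0"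
    using matpow_mat2_lucasU[of "z * (\<Sum>i<a. z ^ i)" "- (z ^ a)" z 0 d'] by (simp add: mat_eq_mat2 mat2_eq_iff)
  then show ?thesis using d(1) z by (auto simp: mult.commute)
qed

text \<open>The vanishing of the Lucas sequence is a polynomial identity in \<open>z\<close> with integer coefficients,
  hence it passes to the Galois conjugate \<open>cis (2 pi / n)\<close> of \<open>z\<close>, where it fails.\<close>
lemma primitive_root_order_ge_6_imp_infinite_PSLq:
  assumes prim: "primitive_root_of_unity n z" and n: "n \<ge> 6" and z: "z \<noteq> 0"
  shows "infinite (PSLq_at z)"
proof
  assume fin: "finite (PSLq_at z)"
  define a where "a = n div 2"
  obtain d where d: "d > 0" "lucasU (z * (\<Sum>i<a. z ^ i)) (z ^ (a + 1)) d = 0"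
    using finite_PSLq_imp_lucasU_zero[OF fin z] by blast
  define T :: "int poly" where "T = monom 1 1 * (\<Sum>i<a. monom 1 i)"
  define D :: "int poly" where "D = monom 1 (a + 1)"
  have ipoly_T: "ipoly w T = w * (\<Sum>i<a. w ^ i)" and ipoly_D: "ipoly w D = w ^ (a + 1)" for w :: complex
    by (simp_all add: T_def D_def ipoly_sum)
  obtain m where m: "coprime m n" "z ^ m = cis (2 * (pi / n))"
    using primitive_root_of_unity_power_eq_cis[OF prim] n by auto
  have "ipoly z (lucasU T D d) = 0" using d(2) by (simp add: ipoly_lucasU ipoly_T ipoly_D)
  then have "ipoly (z ^ m) (lucasU T D d) = 0"
    using ipoly_root_power_coprime[of z n] prim m(1) n by (auto simp: primitive_root_of_unity_def)
  then show False
    using lucasU_cis_nonzero[OF n d(1)] m(2) by (simp add: ipoly_lucasU ipoly_T ipoly_D a_def)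
qed

lemma finite_PSLq_imp_primitive_root:
  assumes fin: "finite (PSLq_at z)" and z: "z \<noteq> 0"
  shows "\<exists>n\<in>{2,3,4,5}. primitive_root_of_unity n z"
proof -
  obtain n where prim: "primitive_root_of_unity n z"
    using finite_PSLq_imp_root_of_unity(1)[OF fin z] primitive_root_of_unity_exists by blast
  then have "n \<noteq> 1" using finite_PSLq_imp_root_of_unity(2)[OF fin z]
    by (auto simp: primitive_root_of_unity_def)
  moreover have "\<not> n \<ge> 6" using primitive_root_order_ge_6_imp_infinite_PSLq[OF prim _ z] fin by blast
  moreover have "n > 0" using prim by (simp add: primitive_root_of_unity_def)
  ultimately have "n \<in> {2,3,4,5}" by auto
  with prim show ?thesis by blast
qed

section \<open>Finiteness for orders 2 to 5 by closure certificates\<close>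

type_synonym int_poly_mat = "int poly \<times> int poly \<times> int poly \<times> int poly"

fun ipoly_mat :: "complex \<Rightarrow> int_poly_mat \<Rightarrow> complex^2^2" where
  "ipoly_mat w (a, b, c, d) = mat2 (ipoly w a) (ipoly w b) (ipoly w c) (ipoly w d)"

fun int_poly_mat_mult :: "int_poly_mat \<Rightarrow> int_poly_mat \<Rightarrow> int_poly_mat" where
  "int_poly_mat_mult (a, b, c, d) (e, f, g, h) = (a*e + b*g, a*f + b*h, c*e + d*g, c*f + d*h)"

fun int_poly_mat_smult :: "int poly \<Rightarrow> int_poly_mat \<Rightarrow> int_poly_mat" where
  "int_poly_mat_smult p (a, b, c, d) = (p * a, p * b, p * c, p * d)"

fun int_poly_mat_cong :: "int poly \<Rightarrow> int_poly_mat \<Rightarrow> int_poly_mat \<Rightarrow> bool" where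
  "int_poly_mat_cong F (a, b, c, d) (e, f, g, h) \<longleftrightarrow>
     pseudo_mod (a - e) F = 0 \<and> pseudo_mod (b - f) F = 0 \<and>
     pseudo_mod (c - g) F = 0 \<and> pseudo_mod (d - h) F = 0"

definition Rq_poly :: int_poly_mat where
  "Rq_poly = (monom 1 1, 1, 0, 1)"

text \<open>At a root of \<open>x\<^sup>n - 1\<close>, \<open>x\<^sup>n\<^sup>-\<^sup>1\<close> represents \<open>q\<^sup>-\<^sup>1\<close>.\<close>
definition Sq_poly :: "nat \<Rightarrow> int_poly_mat" where
  "Sq_poly n = (0, - monom 1 (n - 1), 1, 0)"

definition cert_entry_ok ::
  "int poly \<Rightarrow> int_poly_mat list \<Rightarrow> int_poly_mat \<Rightarrow> int_poly_mat \<Rightarrow> nat \<times> int \<times> nat \<Rightarrow> bool" where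
  "cert_entry_ok F W X A r \<longleftrightarrow> (case r of (j, s, e) \<Rightarrow> j < length W \<and> (s = 1 \<or> s = -1) \<and>
     int_poly_mat_cong F (int_poly_mat_mult X A) (int_poly_mat_smult (smult s (monom 1 e)) (W ! j)))"

text \<open>The matrices \<open>\<plusminus>q\<^sup>e W\<^sub>i\<close> contain the identity and are closed under left multiplication by
  \<open>R\<^sub>q\<close> and \<open>S\<^sub>q\<close> modulo \<open>F\<close>: \<open>1 \<equiv> s\<^sub>0 q\<^bsup>e\<^sub>0\<^esub> W\<^sub>0\<close>, and the \<open>i\<close>-th entry \<open>((j, s, e), (j', s', e'))\<close>
  of the table \<open>T\<close> records \<open>R\<^sub>q W\<^sub>i \<equiv> s q\<^sup>e W\<^sub>j\<close> and \<open>S\<^sub>q W\<^sub>i \<equiv> s' q\<^sup>e\<^sup>' W\<^sub>j\<^sub>'\<close>.\<close>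
definition closure_cert :: "nat \<Rightarrow> int poly \<Rightarrow> int_poly_mat list \<Rightarrow>
    ((nat \<times> int \<times> nat) \<times> (nat \<times> int \<times> nat)) list \<Rightarrow> int \<Rightarrow> nat \<Rightarrow> bool" where
  "closure_cert n F W T s0 e0 \<longleftrightarrow> W \<noteq> [] \<and> (s0 = 1 \<or> s0 = -1) \<and>
     int_poly_mat_cong F (1, 0, 0, 1) (int_poly_mat_smult (smult s0 (monom 1 e0)) (W ! 0)) \<and>
     list_all2 (\<lambda>A (r, r'). cert_entry_ok F W Rq_poly A r \<and> cert_entry_ok F W (Sq_poly n) A r') W T"

lemma ipoly_mat_mult: "ipoly_mat w (int_poly_mat_mult A B) = ipoly_mat w A ** ipoly_mat w B"
  by (cases A; cases B) (simp add: mat2_mult)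

lemma ipoly_mat_smult: "ipoly_mat w (int_poly_mat_smult p A) = mat (ipoly w p) ** ipoly_mat w A"
  by (cases A) (simp add: mat2_mult mat_eq_mat2)

lemma ipoly_eq_0_if_pseudo_mod_eq_0:
  assumes "lead_coeff F = 1" and "ipoly w F = 0" and "pseudo_mod P F = 0"
  shows "ipoly w P = 0"
proof -
  obtain q r where qr: "pseudo_divmod P F = (q, r)" by fastforce
  have "F \<noteq> 0" using assms(1) by auto
  then have "smult (lead_coeff F ^ (Suc (degree P) - degree F)) P = F * q + r" and "r = 0"
    using pseudo_divmod(1)[OF _ qr] qr assms(3) by (auto simp: pseudo_mod_def)
  then have "P = F * q" using assms(1) by simp
  then show ?thesis using assms(2) by simp
qed

lemma ipoly_mat_eq_if_cong:
  assumes "lead_coeff F = 1" and "ipoly w F = 0" and "int_poly_mat_cong F A B"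
  shows "ipoly_mat w A = ipoly_mat w B"
  using assms(3)
  by (cases A; cases B) (auto simp: mat2_eq_iff dest!: ipoly_eq_0_if_pseudo_mod_eq_0[OF assms(1,2)])

definition signed_powers :: "complex \<Rightarrow> complex set" where
  "signed_powers z = {of_int s * z ^ e | s e. s = 1 \<or> s = -1}"

lemma signed_powersI: "s = 1 \<or> s = -1 \<Longrightarrow> of_int s * z ^ e \<in> signed_powers z"
  unfolding signed_powers_def by blast

lemma signed_powers_mult:
  assumes "c \<in> signed_powers z" and "c' \<in> signed_powers z"
  shows "c * c' \<in> signed_powers z"
proof -
  obtain s e s' e' where "s = 1 \<or> s = -1" "c = of_int s * z ^ e" "s' = 1 \<or> s' = -1" "c' = of_int s' * z ^ e'"
    using assms unfolding signed_powers_def by blast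
  then have "c * c' = of_int (s * s') * z ^ (e + e')" "s * s' = 1 \<or> s * s' = -1"
    by (auto simp: power_add)
  then show ?thesis using signed_powersI[of "s * s'" z "e + e'"] by simp
qed

lemma finite_signed_powers:
  assumes "z ^ n = 1" and "n > 0"
  shows "finite (signed_powers z)"
proof -
  have exp_mod: "z ^ e = z ^ (e mod n)" for e
  proof -
    have "z ^ e = z ^ (n * (e div n) + e mod n)" by (simp only: mult_div_mod_eq)
    also have "\<dots> = (z ^ n) ^ (e div n) * z ^ (e mod n)" by (simp only: power_add power_mult)
    finally show ?thesis using assms(1) by simp
  qed
  have "signed_powers z \<subseteq> (\<lambda>(s, e). of_int s * z ^ e) ` ({1, -1} \<times> {..<n})"
  proof
    fix c assume "c \<in> signed_powers z"
    then obtain s e where "s = 1 \<or> s = -1" "c = of_int s * z ^ e"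
      unfolding signed_powers_def by blast
    then have "s = 1 \<or> s = -1" "c = of_int s * z ^ (e mod n)" using exp_mod by simp_all
    moreover have "e mod n < n" using assms(2) by simp
    ultimately show "c \<in> (\<lambda>(s, e). of_int s * z ^ e) ` ({1, -1} \<times> {..<n})" by force
  qed
  then show ?thesis by (rule finite_subset) auto
qed

definition cert_span :: "complex \<Rightarrow> int_poly_mat list \<Rightarrow> (complex^2^2) set" where
  "cert_span z W = (\<lambda>(c, A). mat c ** ipoly_mat z A) ` (signed_powers z \<times> set W)"

lemma cert_spanI: "c \<in> signed_powers z \<Longrightarrow> i < length W \<Longrightarrow> mat c ** ipoly_mat z (W ! i) \<in> cert_span z W"
  unfolding cert_span_def by (rule image_eqI[of _ _ "(c, W ! i)"]) simp_all

lemma cert_spanE: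
  assumes "M \<in> cert_span z W"
  obtains c i where "c \<in> signed_powers z" "i < length W" "M = mat c ** ipoly_mat z (W ! i)"
proof -
  obtain x where x: "x \<in> signed_powers z \<times> set W" "M = (\<lambda>(c, A). mat c ** ipoly_mat z A) x"
    using assms unfolding cert_span_def by (rule imageE)
  obtain c A where "x = (c, A)" by (cases x) blast
  with x have "c \<in> signed_powers z" "A \<in> set W" "M = mat c ** ipoly_mat z A" by simp_all
  then show ?thesis using that by (metis in_set_conv_nth)
qed

lemma finite_cert_span: "finite (signed_powers z) \<Longrightarrow> finite (cert_span z W)"
  by (simp add: cert_span_def)

lemma cert_span_scalar_mult:
  assumes "c \<in> signed_powers z" and "M \<in> cert_span z W"
  shows "mat c ** M \<in> cert_span z W"
proof -
  obtain c' i where "c' \<in> signed_powers z" "i < length W" "M = mat c' ** ipoly_mat z (W ! i)"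
    using assms(2) by (rule cert_spanE)
  then show ?thesis
    using cert_spanI[OF signed_powers_mult[OF assms(1)]] by (simp add: matrix_mul_assoc mat_mult_mat)
qed

lemma cert_span_closed:
  assumes F: "lead_coeff F = 1" "ipoly z F = 0" and cert: "closure_cert n F W T s0 e0"
    and X: "X = Rq_poly \<or> X = Sq_poly n" and M: "M \<in> cert_span z W"
  shows "ipoly_mat z X ** M \<in> cert_span z W"
proof -
  obtain c i where c: "c \<in> signed_powers z" and i: "i < length W" and M: "M = mat c ** ipoly_mat z (W ! i)"
    using M by (rule cert_spanE)
  have "list_all2 (\<lambda>A (r, r'). cert_entry_ok F W Rq_poly A r \<and> cert_entry_ok F W (Sq_poly n) A r') W T"
    using cert by (simp add: closure_cert_def)
  moreover obtain r r' where "T ! i = (r, r')" by (cases "T ! i") blast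
  ultimately have "cert_entry_ok F W Rq_poly (W ! i) r \<and> cert_entry_ok F W (Sq_poly n) (W ! i) r'"
    using list_all2_nthD[OF _ i] by fastforce
  then obtain r where "cert_entry_ok F W X (W ! i) r" using X by blast
  then obtain j s e where j: "j < length W" and s: "s = 1 \<or> s = -1"
    and cong: "int_poly_mat_cong F (int_poly_mat_mult X (W ! i)) (int_poly_mat_smult (smult s (monom 1 e)) (W ! j))"
    unfolding cert_entry_ok_def by auto
  have "ipoly_mat z X ** ipoly_mat z (W ! i) = mat (of_int s * z ^ e) ** ipoly_mat z (W ! j)"
    using ipoly_mat_eq_if_cong[OF F cong] by (simp add: ipoly_mat_mult ipoly_mat_smult)
  then have "ipoly_mat z X ** M = mat c ** (mat (of_int s * z ^ e) ** ipoly_mat z (W ! j))"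
    unfolding M by (metis matrix_mul_assoc mat_mult_commute)
  then show ?thesis
    using cert_span_scalar_mult[OF c cert_spanI[OF signed_powersI[OF s] j]] by simp
qed

lemma finite_PSLq_if_closure_cert:
  assumes zn: "z ^ n = 1" and z1: "z \<noteq> 1" and n: "n > 0"
    and F: "lead_coeff F = 1" "ipoly z F = 0" and cert: "closure_cert n F W T s0 e0"
  shows "finite (PSLq_at z)"
proof -
  have z: "z \<noteq> 0" using zn n by (auto simp: zero_power)
  obtain n' where n': "n = Suc n'" using n gr0_implies_Suc by blast
  then have "inverse z = z ^ (n - 1)"
    using zn by (intro inverse_unique) simp
  then have Rq: "ipoly_mat z Rq_poly = Rq z" and Sq: "ipoly_mat z (Sq_poly n) = Sq z"
    by (simp_all add: Rq_poly_def Sq_poly_def Rq_eq_mat2 Sq_eq_mat2)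
  have Rq_closed: "Rq z ** M \<in> cert_span z W" if "M \<in> cert_span z W" for M
    using cert_span_closed[OF F cert _ that, of Rq_poly] unfolding Rq by simp
  have Sq_closed: "Sq z ** M \<in> cert_span z W" if "M \<in> cert_span z W" for M
    using cert_span_closed[OF F cert _ that, of "Sq_poly n"] unfolding Sq by simp
  have Rq_power_closed: "matpow (Rq z) k ** M \<in> cert_span z W" if "M \<in> cert_span z W" for k M
    by (induction k) (simp_all add: that Rq_closed flip: matrix_mul_assoc)
  have "(\<Sum>i<n. z ^ i) = 0" using power_diff_1_eq[of z n] zn z1 by simp
  then have "matpow (Rq z) n = mat 1" using zn by (simp add: matpow_Rq mat_eq_mat2)
  then have "Rq z ** matpow (Rq z) (n - 1) = mat 1" by (simp add: n')
  then have Rq_inv: "matrix_inv (Rq z) = matpow (Rq z) (n - 1)"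
    by (rule matrix_inv_eqI)
  have Sq_inv: "matrix_inv (Sq z) = mat (- z) ** Sq z"
    using z by (intro matrix_inv_eqI) (simp add: Sq_eq_mat2 mat_eq_mat2 mat2_mult mat2_eq_iff)
  have "- z \<in> signed_powers z" using signed_powersI[of "-1" z 1] by simp
  have "Gq z \<subseteq> cert_span z W"
    unfolding Gq_def
  proof (rule gen_group_subset)
    have "int_poly_mat_cong F (1, 0, 0, 1) (int_poly_mat_smult (smult s0 (monom 1 e0)) (W ! 0))"
      using cert by (simp add: closure_cert_def)
    from ipoly_mat_eq_if_cong[OF F this]
    have "mat 1 = mat (of_int s0 * z ^ e0) ** ipoly_mat z (W ! 0)"
      by (simp add: ipoly_mat_smult mat_eq_mat2)
    then show "mat 1 \<in> cert_span z W"
      using cert cert_spanI[OF signed_powersI] by (simp add: closure_cert_def)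
  next
    fix X M assume X: "X \<in> {Rq z, Sq z}" and M: "M \<in> cert_span z W"
    then show "X ** M \<in> cert_span z W" using Rq_closed Sq_closed by blast
    show "matrix_inv X ** M \<in> cert_span z W"
      using X Rq_power_closed[OF M] cert_span_scalar_mult[OF \<open>- z \<in> signed_powers z\<close> Sq_closed[OF M]]
      by (auto simp: Rq_inv Sq_inv matrix_mul_assoc)
  qed
  then have "finite (Gq z)"
    using finite_cert_span[OF finite_signed_powers[OF zn n]] finite_subset by blast
  then show ?thesis unfolding PSLq_at_def by simp
qed

definition coset_reps_2 :: "int_poly_mat list" where
  "coset_reps_2 = [([:-1:], 0, 0, [:-1:]),
  ([:-1:], [:1:], 0, [:1:]),
  (0, [:-1:], [:-1:], 0),
  (0, [:-1:], [:1:], [:-1:]),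
  ([:-1:], [:1:], [:-1:], 0),
  ([:-1:], 0, [:-1:], [:1:])]"

definition coset_table_2 :: "((nat \<times> int \<times> nat) \<times> (nat \<times> int \<times> nat)) list" where
  "coset_table_2 = [((1,1,1),(2,1,0)),
  ((0,1,1),(3,1,1)),
  ((4,1,0),(0,1,0)),
  ((5,1,1),(1,1,1)),
  ((2,1,0),(5,1,0)),
  ((3,1,1),(4,1,0))]"

lemma closure_cert_2: "closure_cert 2 [:1,1:] coset_reps_2 coset_table_2 1 1"
  unfolding coset_reps_2_def coset_table_2_def by code_simp

definition coset_reps_3 :: "int_poly_mat list" where
  "coset_reps_3 = [([:-1,-1:], 0, 0, [:-1,-1:]),
  ([:-1,-1:], [:0,1:], 0, [:0,1:]),
  (0, [:-1,-1:], [:-1:], 0),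
  ([:-1,-1:], [:1,1:], 0, [:1:]),
  (0, [:-1,-1:], [:0,-1:], [:-1:]),
  ([:-1,-1:], [:1,1:], [:-1,-1:], 0),
  (0, [:-1,-1:], [:1,1:], [:-1,-1:]),
  ([:-1,-1:], 0, [:-1,-1:], [:0,1:]),
  ([:-1,-1:], [:0,1:], [:-1:], 0),
  ([:-1,-1:], 0, [:-1:], [:1:]),
  ([:-1,-1:], [:0,1:], [:-1,-1:], [:1,1:]),
  ([:-1,-1:], [:1,1:], [:-1:], [:1,1:])]"

definition coset_table_3 :: "((nat \<times> int \<times> nat) \<times> (nat \<times> int \<times> nat)) list" where
  "coset_table_3 = [((1,1,1),(2,-1,2)),
  ((3,1,1),(4,-1,1)),
  ((5,-1,1),(0,1,0)),
  ((0,1,1),(6,-1,0)),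
  ((7,-1,2),(1,1,1)),
  ((8,-1,2),(9,-1,2)),
  ((10,-1,0),(3,1,2)),
  ((11,-1,2),(8,-1,2)),
  ((2,1,0),(7,1,0)),
  ((6,1,1),(5,1,0)),
  ((9,-1,2),(11,-1,2)),
  ((4,1,2),(10,1,0))]"

lemma closure_cert_3: "closure_cert 3 [:1,1,1:] coset_reps_3 coset_table_3 1 1"
  unfolding coset_reps_3_def coset_table_3_def by code_simp

definition coset_reps_4 :: "int_poly_mat list" where
  "coset_reps_4 = [([:-1:], 0, 0, [:-1:]),
  ([:-1:], [:0,1:], 0, [:0,1:]),
  (0, [:-1:], [:0,1:], 0),
  ([:-1:], [:1,1:], 0, [:1:]),
  (0, [:-1:], [:-1:], [:0,1:]),
  ([:-1:], [:1:], [:-1:], 0),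
  ([:-1:], [:1:], 0, [:0,-1:]),
  (0, [:-1:], [:0,-1:], [:-1,1:]),
  ([:-1:], 0, [:-1:], [:0,1:]),
  ([:-1,-1:], [:0,1:], [:-1:], 0),
  ([:-1:], 0, [:0,1:], [:0,-1:]),
  (0, [:-1:], [:1:], [:-1:]),
  ([:-1:], [:0,1:], [:-1:], [:1,1:]),
  ([:-1,-1:], [:0,1:], [:-1:], [:0,1:]),
  ([:-1:], [:0,1:], [:0,1:], 0),
  ([:-1:], 0, [:-1,1:], [:1:]),
  ([:-1:], [:1,1:], [:-1:], [:1:]),
  ([:-1,-1:], [:0,1:], [:-1:], [:1,1:]),
  ([:-1:], [:1,1:], [:0,1:], [:1:]),
  ([:-1:], [:0,1:], [:-1,1:], [:1:]),
  ([:-1:], [:1:], [:-1,1:], [:1:]),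
  ([:-1,-1:], [:0,1:], [:-1:], [:1:]),
  ([:-1:], [:1:], [:0,1:], [:1,-1:]),
  ([:-1:], [:1,1:], [:-1,1:], [:1:])]"

definition coset_table_4 :: "((nat \<times> int \<times> nat) \<times> (nat \<times> int \<times> nat)) list" where
  "coset_table_4 = [((1,1,1),(2,1,1)),
  ((3,1,1),(4,1,0)),
  ((5,1,3),(0,1,0)),
  ((6,1,1),(7,1,3)),
  ((8,1,0),(1,1,1)),
  ((9,1,0),(10,1,1)),
  ((0,1,1),(11,1,2)),
  ((12,1,1),(3,1,2)),
  ((13,1,0),(14,1,1)),
  ((14,1,1),(15,1,1)),
  ((11,1,1),(5,1,0)),
  ((16,1,2),(6,1,3)),
  ((17,1,0),(18,1,1)),
  ((18,1,1),(19,1,1)),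
  ((2,1,0),(8,1,0)),
  ((20,1,0),(9,1,0)),
  ((21,1,0),(22,1,1)),
  ((22,1,1),(23,1,1)),
  ((4,1,3),(12,1,0)),
  ((15,1,0),(13,1,0)),
  ((23,1,0),(21,1,0)),
  ((10,1,1),(20,1,1)),
  ((7,1,2),(16,1,0)),
  ((19,1,0),(17,1,0))]"

lemma closure_cert_4: "closure_cert 4 [:1,0,1:] coset_reps_4 coset_table_4 1 2"
  unfolding coset_reps_4_def coset_table_4_def by code_simp

definition coset_reps_5 :: "int_poly_mat list" where
  "coset_reps_5 = [([:-1,-1,-1,-1:], 0, 0, [:-1,-1,-1,-1:]),
  ([:-1,-1,-1,-1:], [:0,0,0,1:], 0, [:0,0,0,1:]),
  (0, [:-1,-1,-1,-1:], [:-1:], 0),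
  ([:-1,-1,-1,-1:], [:0,0,1,1:], 0, [:0,0,1:]),
  (0, [:-1,-1,-1,-1:], [:0,-1:], [:-1:]),
  ([:-1,-1,-1,-1:], [:1,1,1,1:], [:-1,-1,-1,-1:], 0),
  ([:-1,-1,-1,-1:], [:0,1,1,1:], 0, [:0,1:]),
  (0, [:-1,-1,-1,-1:], [:0,0,-1:], [:-1,-1:]),
  ([:-1,-1,-1,-1:], 0, [:-1,-1,-1,-1:], [:0,0,0,1:]),
  ([:-1,-1,-1:], [:1,1,1,1:], [:0,0,0,1:], 0),
  ([:-1,-1,-1,-1:], 0, [:-1:], [:1:]),
  ([:-1,-1,-1,-1:], [:1,1,1,1:], 0, [:1:]),
  (0, [:-1,-1,-1,-1:], [:0,0,0,-1:], [:-1,-1,-1:]),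
  ([:-1,-1,-1,-1:], [:0,0,0,1:], [:-1,-1,-1,-1:], [:0,0,1,1:]),
  ([:-1,-1,-1:], [:0,0,1:], [:0,0,0,1:], [:0,0,1:]),
  ([:-1,-1,-1,-1:], [:0,0,0,1:], [:-1:], 0),
  ([:-1,-1,-1:], [:0,0,1:], [:-1:], 0),
  ([:-1,-1,-1,-1:], 0, [:-1,-1:], [:0,1:]),
  (0, [:-1,-1,-1,-1:], [:1,1,1,1:], [:-1,-1,-1,-1:]),
  ([:-1,-1,-1,-1:], [:0,0,1,1:], [:-1,-1,-1,-1:], [:0,1,1,1:]),
  ([:-1,-1,-1:], [:0,1,1,1:], [:0,0,0,1:], [:0,1,1:]),
  ([:-1,-1,-1,-1:], [:0,0,1,1:], [:-1:], [:1,1,1,1:]),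
  ([:-1,-1,-1:], [:0,1,1,1:], [:-1:], [:1,1,1,1:]),
  ([:-1,-1,-1,-1:], [:0,0,0,1:], [:-1,-1:], [:1,1,1,1:]),
  ([:-1,-1,-1,-1:], 0, [:-1,-1,-1:], [:0,0,1:]),
  ([:-1,-1,-1,-1:], [:1,1,1,1:], [:-1,-1,-1:], [:1,1,1,1:]),
  ([:-1,-1,-1,-1:], [:0,1,1,1:], [:-1,-1,-1,-1:], [:1,1,1,1:]),
  ([:-1,-1,-1:], [:1,1,2,1:], [:0,0,0,1:], [:1,1,1:]),
  ([:-1,-1,-1,-1:], [:0,1,1,1:], [:-1:], [:1,1,1:]),
  ([:-1,-1,-1:], [:1,1,2,1:], [:-1:], [:1,1,1:]),
  ([:-1,-1,-1,-1:], [:0,0,1,1:], [:-1,-1:], [:0,1,1:]),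
  ([:-1,-1,-1,-1:], [:0,0,0,1:], [:-1,-1,-1:], [:0,1,1,1:]),
  ([:-1,-1,-1:], [:1,1,1,1:], [:-1,-1:], [:1,1,1,1:]),
  ([:-1,-1,-1:], [:0,1,1:], [:-1,-1:], [:0,1:]),
  ([:-1,-1,-1:], [:1,1,1,1:], [:-1:], [:1:]),
  ([:-1,-1,-1:], [:0,1,1:], [:0,0,0,1:], [:0,0,0,-1:]),
  ([:-1,-1,-1,-1:], [:1,1,1,1:], [:-1:], [:1,1:]),
  ([:-1,-1,-1:], [:0,1,1:], [:-1:], [:1,1:]),
  ([:-1,-1,-1,-1:], [:0,1,1,1:], [:-1,-1:], [:1,2,1,1:]),
  ([:-1,-1,-1,-1:], [:0,0,1,1:], [:-1,-1,-1:], [:1,1,2,1:]),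
  ([:-1,-1,-1:], [:0,0,1:], [:-1,-1:], [:0,1,1:]),
  ([:-1,-2,-1,-1:], [:0,1,1,1:], [:-1,-1:], [:1,1,1,1:]),
  ([:-1,-1,-1:], [:0,0,1:], [:0,0,1,1:], [:0,0,0,-1:]),
  ([:-1,-2,-1,-1:], [:0,1,1,1:], [:-1,-1:], [:0,1:]),
  ([:-1,-1,-1:], [:1,1,1,1:], [:0,0,1,1:], [:1,1:]),
  ([:-1,-1,-1,-1:], [:1,1,1,1:], [:-1,-1:], [:1,1,1:]),
  ([:-1,-1,-1,-1:], [:0,1,1,1:], [:-1,-1,-1:], [:0,1,1:]),
  ([:-1,-1,-1:], [:0,1,1,1:], [:-1,-1:], [:1,2,1,1:]),
  ([:-1,-2,-1,-1:], [:0,1,1,1:], [:-1,-1:], [:0,1,1:]),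
  ([:-1,-1,-1:], [:0,1,1,1:], [:0,0,1,1:], [:0,1:]),
  ([:-1,-1,-1:], [:0,0,1:], [:-1,0,0,1:], [:1,1,1:]),
  ([:-1,-1,-1:], [:1,1,1,1:], [:-1,0,0,1:], [:1,1,1:]),
  ([:-1,-1,-1:], [:1,1,2,1:], [:-1,-1:], [:1,1,1:]),
  ([:-1,-2,-1,-1:], [:0,1,1,1:], [:-1,-1:], [:1,2,1,1:]),
  ([:-1,-1,-1:], [:1,1,2,1:], [:0,0,1,1:], [:1,1,1:]),
  ([:-1,-1,-1:], [:0,1,1,1:], [:-1,0,0,1:], [:1,1,1:]),
  ([:-1,-1,-1:], [:0,1,1:], [:-1,0,0,1:], [:1,1,1:]),
  ([:-1,-2,-1,-1:], [:0,1,1,1:], [:-1,-1:], [:1,1,1:]),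
  ([:-1,-1,-1:], [:0,1,1:], [:0,0,1,1:], [:0,1,0,-1:]),
  ([:-1,-1,-1:], [:1,1,2,1:], [:-1,0,0,1:], [:1,1,1:])]"

definition coset_table_5 :: "((nat \<times> int \<times> nat) \<times> (nat \<times> int \<times> nat)) list" where
  "coset_table_5 = [((1,1,1),(2,-1,4)),
  ((3,1,1),(4,-1,3)),
  ((5,-1,1),(0,1,0)),
  ((6,1,1),(7,-1,2)),
  ((8,-1,2),(1,1,1)),
  ((9,1,1),(10,-1,4)),
  ((11,1,1),(12,-1,1)),
  ((13,-1,3),(3,1,2)),
  ((14,1,1),(15,-1,4)),
  ((16,-1,3),(17,-1,3)),
  ((18,1,1),(5,1,0)),
  ((0,1,1),(18,-1,0)),
  ((19,-1,4),(6,1,3)),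
  ((20,1,1),(21,-1,4)),
  ((22,-1,3),(23,-1,3)),
  ((2,1,0),(8,1,0)),
  ((15,1,0),(24,1,0)),
  ((25,-1,2),(9,1,1)),
  ((26,-1,0),(11,1,4)),
  ((27,1,1),(28,-1,4)),
  ((29,-1,3),(30,-1,3)),
  ((4,1,4),(13,1,0)),
  ((21,1,0),(31,1,0)),
  ((24,-1,2),(14,1,1)),
  ((32,-1,3),(16,-1,4)),
  ((33,-1,3),(34,-1,4)),
  ((35,1,1),(36,-1,4)),
  ((37,-1,3),(38,-1,3)),
  ((7,1,3),(19,1,0)),
  ((28,1,0),(39,1,0)),
  ((31,-1,2),(20,1,1)),
  ((40,-1,3),(22,-1,4)),
  ((41,1,0),(42,1,1)),
  ((43,1,0),(44,1,1)),
  ((10,1,0),(25,1,0)),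
  ((34,-1,3),(45,-1,3)),
  ((12,1,2),(26,1,0)),
  ((36,1,0),(46,1,0)),
  ((39,-1,2),(27,1,1)),
  ((47,-1,3),(29,-1,4)),
  ((48,1,0),(49,1,1)),
  ((49,-1,3),(50,1,1)),
  ((17,-1,2),(32,-1,3)),
  ((42,-1,3),(51,1,1)),
  ((45,-1,2),(33,-1,3)),
  ((46,-1,2),(35,1,1)),
  ((52,-1,3),(37,-1,4)),
  ((53,1,0),(54,1,1)),
  ((54,-1,3),(55,1,1)),
  ((23,-1,2),(40,-1,3)),
  ((51,1,0),(41,-1,3)),
  ((56,1,0),(43,-1,3)),
  ((57,1,0),(58,1,1)),
  ((58,-1,3),(59,1,1)),
  ((30,-1,2),(47,-1,3)),
  ((50,1,0),(48,-1,3)),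
  ((59,1,0),(57,-1,3)),
  ((44,-1,3),(56,1,1)),
  ((38,-1,2),(52,-1,3)),
  ((55,1,0),(53,-1,3))]"

lemma closure_cert_5: "closure_cert 5 [:1,1,1,1,1:] coset_reps_5 coset_table_5 1 1"
  unfolding coset_reps_5_def coset_table_5_def by code_simp

lemma primitive_root_imp_finite_PSLq:
  assumes prim: "primitive_root_of_unity n z" and n: "n \<in> {2, 3, 4, 5}"
  shows "finite (PSLq_at z)"
proof -
  have n0: "n > 0" and zn: "z ^ n = 1" and not_one: "\<And>k. 0 < k \<Longrightarrow> k < n \<Longrightarrow> z ^ k \<noteq> 1"
    using prim by (auto simp: primitive_root_of_unity_def)
  have z1: "z \<noteq> 1" using not_one[of 1] n by auto
  note finite = finite_PSLq_if_closure_cert[OF zn z1 n0]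
  have "(z - 1) * ipoly z [:1, 1:] = z ^ 2 - 1"
    "(z - 1) * ipoly z [:1, 1, 1:] = z ^ 3 - 1"
    "(z ^ 2 - 1) * ipoly z [:1, 0, 1:] = z ^ 4 - 1"
    "(z - 1) * ipoly z [:1, 1, 1, 1, 1:] = z ^ 5 - 1"
    by (simp_all add: ipoly_pCons algebra_simps eval_nat_numeral)
  moreover have "z - 1 \<noteq> 0" "n = 4 \<Longrightarrow> z ^ 2 - 1 \<noteq> 0" using z1 not_one[of 2] by auto
  ultimately consider (order2) "n = 2" "ipoly z [:1, 1:] = 0" | (order3) "n = 3" "ipoly z [:1, 1, 1:] = 0"
    | (order4) "n = 4" "ipoly z [:1, 0, 1:] = 0" | (order5) "n = 5" "ipoly z [:1, 1, 1, 1, 1:] = 0"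
    using n zn by auto
  then show ?thesis
  proof cases
    case order2
    then show ?thesis using finite[OF _ _ closure_cert_2[folded \<open>n = 2\<close>]] by simp
  next
    case order3
    then show ?thesis using finite[OF _ _ closure_cert_3[folded \<open>n = 3\<close>]] by simp
  next
    case order4
    then show ?thesis using finite[OF _ _ closure_cert_4[folded \<open>n = 4\<close>]] by simp
  next
    case order5
    then show ?thesis using finite[OF _ _ closure_cert_5[folded \<open>n = 5\<close>]] by simp
  qed
qed

theorem corollary4p3:
  fixes z :: complex
  assumes "z \<noteq> 0"
  shows "finite (PSLq_at z) \<longleftrightarrow> (\<exists>n\<in>{2,3,4,5}. primitive_root_of_unity n z)"
  using finite_PSLq_imp_primitive_root[OF _ assms] primitive_root_imp_finite_PSLq by blast

end
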